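(* Let $d\ge 3$ and $r$ be integers and let $F$ be a general form of degree $d$ in three variables. If $r\geq d+2$, then there exists a star configuration $\mathbb{X}(r)\subset\mathbb{P}^2$ apolar to $F$. If $r\leq d$, then there does not exist a star configuration $\mathbb{X}(r)$ apolar to $F$.
   Context: Let $S=\mathbb{C}[x_0,x_1,x_2]$ and $T=\mathbb{C}[y_0,y_1,y_2]$, where $T$ acts on $S$ by differentiation, $y_j=\partial/\partial x_j$. For a form $F\in S$, $F^\perp=\{\partial\in T:\partial F=0\}$. A finite set of points $\mathbb{X}\subset\mathbb{P}^2=\mathbb{P}(S_1)$ with defining ideal $I(\mathbb{X})\subseteq T$ is apolar to $F$ if $I(\mathbb{X})\subseteq F^\perp$. A star configuration $\mathbb{X}(r)\subset\mathbb{P}^2$: take $r$ linear forms $l_1,\dots,l_r\in T_1$ such that any $3$ of them are linearly independent; $\mathbb{X}(r)$ is the set of $\binom{r}{2}$ pairwise intersection points of the lines $\{l_i=0\}$. "$F$ general" means $F$ ranges over a suitable nonempty Zariski open subset of the space of degree $d$ ternary forms. *)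

theory Defs
  imports Complex_Main
begin

text \<open>A monomial x0^a x1^b x2^c (resp. y0^a y1^b y2^c) is encoded by its
exponent triple (a,b,c); a form is its coefficient function (homogeneous of degree e:
coefficients vanish outside total degree e). Points of P^2 are represented by nonzero
vectors of C^3 (a finite set of projective points by its punctured affine cone).\<close>

type_synonym mon = "nat \<times> nat \<times> nat"
type_synonym form = "mon \<Rightarrow> complex"
type_synonym pt = "complex \<times> complex \<times> complex"

definition mdeg :: "mon \<Rightarrow> nat" where
  "mdeg m = (case m of (a, b, c) \<Rightarrow> a + b + c)"

definition monos_of :: "nat \<Rightarrow> mon set" where
  "monos_of e = {m. mdeg m = e}"

definition homog :: "nat \<Rightarrow> form \<Rightarrow> bool" where
  "homog e f \<longleftrightarrow> (\<forall>m. mdeg m \<noteq> e \<longrightarrow> f m = 0)"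

fun mon_eval :: "mon \<Rightarrow> pt \<Rightarrow> complex" where
  "mon_eval (a, b, c) (x, y, z) = x ^ a * y ^ b * z ^ c"

definition heval :: "nat \<Rightarrow> form \<Rightarrow> pt \<Rightarrow> complex" where
  "heval e g v = (\<Sum>m\<in>monos_of e. g m * mon_eval m v)"

fun madd :: "mon \<Rightarrow> mon \<Rightarrow> mon" where
  "madd (a, b, c) (a', b', c') = (a + a', b + b', c + c')"

text \<open>d^alpha/dx^alpha applied to x^(alpha+gamma) equals dcoef alpha gamma times x^gamma.\<close>
fun dcoef :: "mon \<Rightarrow> mon \<Rightarrow> complex" where
  "dcoef (a, b, c) (a', b', c') =
     (fact (a + a') / fact a') * (fact (b + b') / fact b') * (fact (c + c') / fact c')"

text \<open>Apolar action: g (of degree e in T, y_j = d/dx_j) acting on F by differentiation.\<close>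
definition contract :: "nat \<Rightarrow> form \<Rightarrow> form \<Rightarrow> form" where
  "contract e g F = (\<lambda>\<gamma>. \<Sum>\<alpha>\<in>monos_of e. g \<alpha> * dcoef \<alpha> \<gamma> * F (madd \<alpha> \<gamma>))"

text \<open>X apolar to F: I(X) \<subseteq> F^perp, checked degree by degree (both are homogeneous).\<close>
definition apolar :: "pt set \<Rightarrow> form \<Rightarrow> bool" where
  "apolar X F \<longleftrightarrow>
     (\<forall>e g. homog e g \<longrightarrow> (\<forall>v\<in>X. heval e g v = 0) \<longrightarrow> contract e g F = (\<lambda>_. 0))"

fun dot3 :: "pt \<Rightarrow> pt \<Rightarrow> complex" where
  "dot3 (a, b, c) (x, y, z) = a * x + b * y + c * z"

fun smul3 :: "complex \<Rightarrow> pt \<Rightarrow> pt" where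
  "smul3 t (x, y, z) = (t * x, t * y, t * z)"

fun add3 :: "pt \<Rightarrow> pt \<Rightarrow> pt" where
  "add3 (a, b, c) (x, y, z) = (a + x, b + y, c + z)"

definition indep2 :: "pt \<Rightarrow> pt \<Rightarrow> bool" where
  "indep2 u v \<longleftrightarrow> (\<forall>a b. add3 (smul3 a u) (smul3 b v) = (0, 0, 0) \<longrightarrow> a = 0 \<and> b = 0)"

definition indep3 :: "pt \<Rightarrow> pt \<Rightarrow> pt \<Rightarrow> bool" where
  "indep3 u v w \<longleftrightarrow> (\<forall>a b c. add3 (add3 (smul3 a u) (smul3 b v)) (smul3 c w) = (0, 0, 0)
      \<longrightarrow> a = 0 \<and> b = 0 \<and> c = 0)"

text \<open>r linear forms l 0, ..., l (r-1) in T_1 (coefficient vectors), any three linearly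
independent (and any two, which only matters for r = 2).\<close>
definition star_lines :: "nat \<Rightarrow> (nat \<Rightarrow> pt) \<Rightarrow> bool" where
  "star_lines r l \<longleftrightarrow>
     (\<forall>i<r. \<forall>j<r. \<forall>k<r. i \<noteq> j \<and> j \<noteq> k \<and> i \<noteq> k \<longrightarrow> indep3 (l i) (l j) (l k)) \<and>
     (\<forall>i<r. \<forall>j<r. i \<noteq> j \<longrightarrow> indep2 (l i) (l j))"

definition star_points :: "nat \<Rightarrow> (nat \<Rightarrow> pt) \<Rightarrow> pt set" where
  "star_points r l = {v. v \<noteq> (0, 0, 0) \<and>
      (\<exists>i<r. \<exists>j<r. i \<noteq> j \<and> dot3 (l i) v = 0 \<and> dot3 (l j) v = 0)}"

inductive_set polyfun :: "(form \<Rightarrow> complex) set" where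
  pf_const: "(\<lambda>F. c) \<in> polyfun"
| pf_coord: "(\<lambda>F. F m) \<in> polyfun"
| pf_add: "p \<in> polyfun \<Longrightarrow> q \<in> polyfun \<Longrightarrow> (\<lambda>F. p F + q F) \<in> polyfun"
| pf_mult: "p \<in> polyfun \<Longrightarrow> q \<in> polyfun \<Longrightarrow> (\<lambda>F. p F * q F) \<in> polyfun"

text \<open>P holds for a general form of degree d: on a nonempty Zariski open subset of S_d.\<close>
definition general :: "nat \<Rightarrow> (form \<Rightarrow> bool) \<Rightarrow> bool" where
  "general d P \<longleftrightarrow> (\<exists>\<Phi>\<in>polyfun. (\<exists>F. homog d F \<and> \<Phi> F \<noteq> 0) \<and>
      (\<forall>F. homog d F \<and> \<Phi> F \<noteq> 0 \<longrightarrow> P F))"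

end

theory Submission
  imports Defs "HOL-Library.FuncSet"
begin

text \<open>Write \<open>P\<^sub>i\<^sub>j = l\<^sub>i \<times> l\<^sub>j\<close> for the crossings of a star configuration \<open>X(r)\<close>. The product of the
  \<open>r - 2\<close> lines not through \<open>P\<^sub>i\<^sub>j\<close>, times a power of a linear form not vanishing at \<open>P\<^sub>i\<^sub>j\<close>, is a
  form of any degree \<open>e \<ge> r - 2\<close> vanishing at all crossings but \<open>P\<^sub>i\<^sub>j\<close>. As \<open>X(r)\<close> has
  \<open>r(r - 1)/2 = dim S\<^sub>r\<^sub>-\<^sub>2\<close> points, these separators show that no nonzero form of degree \<open>\<le> r - 2\<close>
  vanishes on \<open>X(r)\<close>; hence for \<open>r \<ge> d + 2\<close> the ideal of \<open>X(r)\<close> has no elements of degree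
  \<open>\<le> d\<close>, and \<open>X(r)\<close> is apolar to every form of degree \<open>d\<close>.

  Conversely, pairing a form \<open>F\<close> apolar to \<open>X(r)\<close> with separators of degree \<open>d\<close> shows
  \<open>F = \<Sum> c\<^sub>i\<^sub>j (P\<^sub>i\<^sub>j \<cdot> x)\<^sup>d\<close>. Writing each line in one of three affine charts, such \<open>F\<close> lie in the
  images of \<open>3\<^sup>r\<close> polynomial maps in \<open>r(r - 1)/2 + 2r\<close> parameters, fewer than
  \<open>dim S\<^sub>d = (d + 1)(d + 2)/2\<close> when \<open>r \<le> d\<close>. Counting monomials then yields a nonzero polynomial
  in the coefficients of \<open>F\<close> vanishing on all these images.\<close>

section \<open>Linear systems and polynomial functions\<close>

lemma exists_nontrivial_solution:
  fixes c :: "'e \<Rightarrow> 'u \<Rightarrow> 'a::field"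
  assumes "finite Eq" "finite U" "card Eq < card U"
  shows "\<exists>q. (\<exists>u\<in>U. q u \<noteq> 0) \<and> (\<forall>\<epsilon>\<in>Eq. (\<Sum>u\<in>U. c \<epsilon> u * q u) = 0)"
  using assms
proof (induction Eq arbitrary: U c rule: finite_induct)
  case empty
  then obtain u where "u \<in> U" by fastforce
  then show ?case by (intro exI[of _ "\<lambda>_. 1"]) auto
next
  case (insert \<epsilon>0 Eq)
  show ?case
  proof (cases "\<forall>u\<in>U. c \<epsilon>0 u = 0")
    case True
    have "card Eq < card U" using insert by simp
    with insert.IH[OF insert.prems(1)] obtain q where
      "\<exists>u\<in>U. q u \<noteq> 0" "\<forall>\<epsilon>\<in>Eq. (\<Sum>u\<in>U. c \<epsilon> u * q u) = 0" by blast
    with True show ?thesis by auto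
  next
    case False
    then obtain u0 where u0: "u0 \<in> U" "c \<epsilon>0 u0 \<noteq> 0" by blast
    define U' where "U' = U - {u0}"
    \<comment> \<open>Gaussian elimination of the unknown \<open>u0\<close> by means of the equation \<open>\<epsilon>0\<close>.\<close>
    define c' where "c' = (\<lambda>\<epsilon> u. c \<epsilon> u - c \<epsilon> u0 * c \<epsilon>0 u / c \<epsilon>0 u0)"
    have "card Eq < card U'" using insert u0 by (simp add: U'_def)
    with insert.IH[of U' c'] obtain q' where
      q': "\<exists>u\<in>U'. q' u \<noteq> 0" "\<forall>\<epsilon>\<in>Eq. (\<Sum>u\<in>U'. c' \<epsilon> u * q' u) = 0"
      using insert.prems by (auto simp: U'_def)
    define S0 where "S0 = (\<Sum>u\<in>U'. c \<epsilon>0 u * q' u)"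
    define q where "q = q'(u0 := - S0 / c \<epsilon>0 u0)"
    have split: "(\<Sum>u\<in>U. f u * q u) = - f u0 * S0 / c \<epsilon>0 u0 + (\<Sum>u\<in>U'. f u * q' u)" for f
    proof -
      have "(\<Sum>u\<in>U'. f u * q u) = (\<Sum>u\<in>U'. f u * q' u)"
        by (rule sum.cong) (auto simp: U'_def q_def)
      then show ?thesis using u0 insert.prems by (simp add: U'_def q_def sum.remove)
    qed
    have "(\<Sum>u\<in>U. c \<epsilon> u * q u) = 0" if "\<epsilon> \<in> Eq" for \<epsilon>
    proof -
      have "(\<Sum>u\<in>U'. c' \<epsilon> u * q' u) = (\<Sum>u\<in>U'. c \<epsilon> u * q' u) - c \<epsilon> u0 / c \<epsilon>0 u0 * S0"
        unfolding c'_def S0_def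
        by (simp add: algebra_simps sum_subtractf sum_distrib_left sum_divide_distrib)
      with q'(2) that show ?thesis by (simp add: split)
    qed
    moreover have "(\<Sum>u\<in>U. c \<epsilon>0 u * q u) = 0"
      using u0 by (simp add: split S0_def)
    moreover have "\<exists>u\<in>U. q u \<noteq> 0" using q'(1) by (auto simp: q_def U'_def)
    ultimately show ?thesis by auto
  qed
qed

definition bounded_exps :: "'v set \<Rightarrow> nat \<Rightarrow> ('v \<Rightarrow> nat) set" where
  "bounded_exps V E = PiE V (\<lambda>_. {..E})"

definition monomial_at :: "'v set \<Rightarrow> ('v \<Rightarrow> nat) \<Rightarrow> ('v \<Rightarrow> complex) \<Rightarrow> complex" where
  "monomial_at V a x = (\<Prod>v\<in>V. x v ^ a v)"

text \<open>\<open>f\<close> is a polynomial in the variables \<open>V\<close> of degree at most \<open>E\<close> in each variable separately.\<close>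
definition poly_deg_le :: "'v set \<Rightarrow> nat \<Rightarrow> (('v \<Rightarrow> complex) \<Rightarrow> complex) \<Rightarrow> bool" where
  "poly_deg_le V E f \<longleftrightarrow> (\<exists>c. \<forall>x. f x = (\<Sum>a\<in>bounded_exps V E. c a * monomial_at V a x))"

lemma finite_bounded_exps: "finite V \<Longrightarrow> finite (bounded_exps V E)"
  unfolding bounded_exps_def by (intro finite_PiE) auto

lemma card_bounded_exps: "finite V \<Longrightarrow> card (bounded_exps V E) = Suc E ^ card V"
  unfolding bounded_exps_def by (simp add: card_PiE)

lemma poly_deg_le_mono:
  assumes "finite V" "E \<le> E'" "poly_deg_le V E f"
  shows "poly_deg_le V E' f"
proof -
  obtain c where c: "\<And>x. f x = (\<Sum>a\<in>bounded_exps V E. c a * monomial_at V a x)"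
    using assms(3) unfolding poly_deg_le_def by blast
  have sub: "bounded_exps V E \<subseteq> bounded_exps V E'"
    unfolding bounded_exps_def by (rule PiE_mono) (use assms(2) in auto)
  have "f x = (\<Sum>a\<in>bounded_exps V E'. (if a \<in> bounded_exps V E then c a else 0) * monomial_at V a x)" for x
    unfolding c by (rule sum.mono_neutral_cong_left) (use sub finite_bounded_exps[OF assms(1)] in auto)
  then show ?thesis unfolding poly_deg_le_def
    by (intro exI[of _ "\<lambda>a. if a \<in> bounded_exps V E then c a else 0"]) simp
qed

lemma sum_delta_mult:
  fixes k :: "'a::comm_semiring_1"
  assumes "finite S" "a \<in> S"
  shows "(\<Sum>x\<in>S. (if x = a then k else 0) * f x) = k * f a"
proof -
  have "(\<Sum>x\<in>S. (if x = a then k else 0) * f x) = (\<Sum>x\<in>S. if x = a then k * f x else 0)"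
    by (rule sum.cong) auto
  with assms show ?thesis by simp
qed

lemma poly_deg_le_monomial:
  assumes "finite V" "a \<in> bounded_exps V E"
  shows "poly_deg_le V E (\<lambda>x. k * monomial_at V a x)"
  using assms finite_bounded_exps[OF assms(1)] unfolding poly_deg_le_def
  by (intro exI[of _ "\<lambda>b. if b = a then k else 0"]) (simp add: sum_delta_mult)

lemma poly_deg_le_const: "finite V \<Longrightarrow> poly_deg_le V E (\<lambda>x. k)"
  using poly_deg_le_monomial[of V "\<lambda>v\<in>V. 0" E k]
  by (simp add: bounded_exps_def monomial_at_def)

lemma poly_deg_le_var:
  assumes "finite V" "v \<in> V"
  shows "poly_deg_le V 1 (\<lambda>x. x v)"
proof -
  have "monomial_at V (\<lambda>w\<in>V. if w = v then 1 else 0) x = (\<Prod>w\<in>V. if w = v then x w else 1)" for x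
    unfolding monomial_at_def by (rule prod.cong) auto
  then have "monomial_at V (\<lambda>w\<in>V. if w = v then 1 else 0) x = x v" for x
    using assms by simp
  with poly_deg_le_monomial[OF assms(1), of "\<lambda>w\<in>V. if w = v then 1 else 0" 1 1] show ?thesis
    by (simp add: bounded_exps_def)
qed

lemma poly_deg_le_add:
  assumes "poly_deg_le V E f" "poly_deg_le V E g"
  shows "poly_deg_le V E (\<lambda>x. f x + g x)"
proof -
  obtain c d where "\<And>x. f x = (\<Sum>a\<in>bounded_exps V E. c a * monomial_at V a x)"
    "\<And>x. g x = (\<Sum>a\<in>bounded_exps V E. d a * monomial_at V a x)"
    using assms unfolding poly_deg_le_def by blast
  then have "f x + g x = (\<Sum>a\<in>bounded_exps V E. (c a + d a) * monomial_at V a x)" for x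
    by (simp add: sum.distrib distrib_right)
  then show ?thesis unfolding poly_deg_le_def by (intro exI[of _ "\<lambda>a. c a + d a"]) simp
qed

lemma poly_deg_le_mult:
  assumes V: "finite V" and "poly_deg_le V E f" "poly_deg_le V E' g"
  shows "poly_deg_le V (E + E') (\<lambda>x. f x * g x)"
proof -
  obtain c d where c: "\<And>x. f x = (\<Sum>a\<in>bounded_exps V E. c a * monomial_at V a x)"
    and d: "\<And>x. g x = (\<Sum>a\<in>bounded_exps V E'. d a * monomial_at V a x)"
    using assms unfolding poly_deg_le_def by blast
  define S where "S = bounded_exps V E \<times> bounded_exps V E'"
  define \<phi> where "\<phi> = (\<lambda>(a, b). \<lambda>v\<in>V. a v + b v :: nat)"
  have \<phi>S: "\<phi> ` S \<subseteq> bounded_exps V (E + E')"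
    unfolding S_def \<phi>_def bounded_exps_def by (auto simp: PiE_iff add_mono)
  have mon_\<phi>: "monomial_at V (\<phi> (a, b)) x = monomial_at V a x * monomial_at V b x" for a b x
    unfolding monomial_at_def \<phi>_def by (simp add: power_add prod.distrib)
  define cd where "cd = (\<lambda>m. \<Sum>(a, b)\<in>{p\<in>S. \<phi> p = m}. c a * d b)"
  have "f x * g x = (\<Sum>m\<in>bounded_exps V (E + E'). cd m * monomial_at V m x)" for x
  proof -
    have "f x * g x = (\<Sum>p\<in>S. c (fst p) * d (snd p) * monomial_at V (\<phi> p) x)"
      unfolding c d S_def sum_product sum.cartesian_product
      by (intro sum.cong refl) (clarsimp simp: mon_\<phi> mult_ac)
    also have "\<dots> = (\<Sum>m\<in>bounded_exps V (E + E'). \<Sum>p\<in>{p\<in>S. \<phi> p = m}. c (fst p) * d (snd p) * monomial_at V (\<phi> p) x)"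
      using V by (intro sum.group[symmetric] \<phi>S) (auto simp: S_def finite_bounded_exps)
    also have "\<dots> = (\<Sum>m\<in>bounded_exps V (E + E'). cd m * monomial_at V m x)"
      unfolding cd_def sum_distrib_right by (intro sum.cong refl) (auto simp: case_prod_beta)
    finally show ?thesis .
  qed
  then show ?thesis unfolding poly_deg_le_def by (intro exI[of _ cd]) simp
qed

lemma poly_deg_le_diff:
  assumes "finite V" "poly_deg_le V E f" "poly_deg_le V E g"
  shows "poly_deg_le V E (\<lambda>x. f x - g x)"
proof -
  have "poly_deg_le V (0 + E) (\<lambda>x. - 1 * g x)"
    by (rule poly_deg_le_mult[OF assms(1) poly_deg_le_const[OF assms(1)] assms(3)])
  from poly_deg_le_add[OF assms(2) this[simplified]] show ?thesis by simp
qed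

lemma poly_deg_le_sum:
  assumes "finite V" "\<And>i. i \<in> S \<Longrightarrow> poly_deg_le V E (f i)"
  shows "poly_deg_le V E (\<lambda>x. \<Sum>i\<in>S. f i x)"
  using assms(2)
proof (induction S rule: infinite_finite_induct)
  case (insert i S)
  then show ?case using poly_deg_le_add[of V E "f i"] by simp
qed (use poly_deg_le_const[OF assms(1)] in auto)

lemma poly_deg_le_prod:
  assumes "finite V" "\<And>i. i \<in> S \<Longrightarrow> poly_deg_le V (E i) (f i)"
  shows "poly_deg_le V (\<Sum>i\<in>S. E i) (\<lambda>x. \<Prod>i\<in>S. f i x)"
  using assms(2)
proof (induction S rule: infinite_finite_induct)
  case (insert i S)
  then show ?case using poly_deg_le_mult[OF assms(1), of "E i" "f i"] by simp
qed (use poly_deg_le_const[OF assms(1)] in auto)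

lemma poly_deg_le_power:
  assumes "finite V" "poly_deg_le V E f"
  shows "poly_deg_le V (n * E) (\<lambda>x. f x ^ n)"
  using poly_deg_le_prod[OF assms(1), of "{..<n}" "\<lambda>_. E" "\<lambda>_. f"] assms(2) by simp

lemma sum_bounded_exps_insert:
  assumes "j \<notin> J"
  shows "(\<Sum>a\<in>bounded_exps (insert j J) E. f a) = (\<Sum>y\<le>E. \<Sum>b\<in>bounded_exps J E. f (b(j := y)))"
  unfolding bounded_exps_def PiE_insert_eq
  by (subst sum.reindex[OF inj_combinator[OF assms]]) (simp add: sum.cartesian_product case_prod_beta)

lemma monomial_at_insert:
  assumes "finite J" "j \<notin> J"
  shows "monomial_at (insert j J) (b(j := y)) (x(j := z)) = z ^ y * monomial_at J b x"
proof -
  have "(\<Prod>v\<in>J. (x(j := z)) v ^ (b(j := y)) v) = (\<Prod>v\<in>J. x v ^ b v)"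
    using assms by (intro prod.cong) auto
  with assms show ?thesis by (simp add: monomial_at_def)
qed

lemma monomial_coeffs_eq_0:
  assumes "finite J" "\<And>x. (\<Sum>a\<in>bounded_exps J E. q a * monomial_at J a x) = 0"
  shows "\<forall>a\<in>bounded_exps J E. q a = 0"
  using assms
proof (induction J arbitrary: q rule: finite_induct)
  case empty
  then show ?case by (simp add: bounded_exps_def monomial_at_def)
next
  case (insert j J)
  have "(\<Sum>b\<in>bounded_exps J E. q (b(j := y)) * monomial_at J b x) = 0" if "y \<le> E" for x y
  proof -
    let ?C = "\<lambda>y. \<Sum>b\<in>bounded_exps J E. q (b(j := y)) * monomial_at J b x"
    have "(\<Sum>y\<le>E. ?C y * z ^ y) = 0" for z
    proof -
      have "0 = (\<Sum>a\<in>bounded_exps (insert j J) E. q a * monomial_at (insert j J) a (x(j := z)))"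
        using insert.prems by simp
      also have "\<dots> = (\<Sum>y\<le>E. \<Sum>b\<in>bounded_exps J E. q (b(j := y)) * monomial_at (insert j J) (b(j := y)) (x(j := z)))"
        using insert.hyps(2) by (rule sum_bounded_exps_insert)
      also have "\<dots> = (\<Sum>y\<le>E. ?C y * z ^ y)"
        unfolding sum_distrib_right
        by (intro sum.cong refl) (simp only: monomial_at_insert[OF insert.hyps] mult_ac)
      finally show ?thesis by simp
    qed
    with that show ?thesis using polyfun_eq_0[of ?C E] by auto
  qed
  then have IH: "q (b(j := y)) = 0" if "b \<in> bounded_exps J E" "y \<le> E" for b y
    using insert.IH[of "\<lambda>b. q (b(j := y))"] that by auto
  show ?case
  proof
    fix a assume "a \<in> bounded_exps (insert j J) E"
    then have "a(j := undefined) \<in> bounded_exps J E" "a j \<le> E"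
      using insert.hyps(2) by (auto simp: bounded_exps_def PiE_iff extensional_def)
    from IH[OF this] show "q a = 0" by simp
  qed
qed

section \<open>Ternary forms\<close>

lemma finite_monos_of: "finite (monos_of e)"
proof -
  have "monos_of e \<subseteq> {..e} \<times> {..e} \<times> {..e}" by (auto simp: monos_of_def mdeg_def)
  then show ?thesis by (rule finite_subset) auto
qed

lemma card_monos_of: "2 * card (monos_of e) = (e + 1) * (e + 2)"
proof (induction e)
  case 0
  have "monos_of 0 = {(0, 0, 0)}" by (auto simp: monos_of_def mdeg_def)
  then show ?case by simp
next
  case (Suc e)
  define shift0 :: "mon \<Rightarrow> mon" where "shift0 = (\<lambda>(a, b, c). (Suc a, b, c))"
  define B :: "mon set" where "B = (\<lambda>b. (0, b, Suc e - b)) ` {..Suc e}"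
  have "monos_of (Suc e) = shift0 ` monos_of e \<union> B"
  proof
    show "monos_of (Suc e) \<subseteq> shift0 ` monos_of e \<union> B"
    proof
      fix m assume m: "m \<in> monos_of (Suc e)"
      obtain a b c where abc: "m = (a, b, c)" by (cases m)
      show "m \<in> shift0 ` monos_of e \<union> B"
      proof (cases a)
        case 0
        then show ?thesis using m abc by (auto simp: B_def monos_of_def mdeg_def image_iff)
      next
        case (Suc a')
        then have "m = shift0 (a', b, c)" "(a', b, c) \<in> monos_of e"
          using m abc by (auto simp: shift0_def monos_of_def mdeg_def)
        then show ?thesis by blast
      qed
    qed
  qed (auto simp: shift0_def B_def monos_of_def mdeg_def)
  moreover have "shift0 ` monos_of e \<inter> B = {}" by (auto simp: shift0_def B_def)
  moreover have "inj_on shift0 (monos_of e)" by (auto simp: shift0_def inj_on_def)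
  moreover have "card B = e + 2" unfolding B_def by (subst card_image) (auto intro: inj_onI)
  ultimately have "card (monos_of (Suc e)) = card (monos_of e) + (e + 2)"
    by (simp add: card_Un_disjoint card_image finite_monos_of B_def)
  with Suc show ?case by simp
qed

lemma homog_eq_0_outside: "homog e g \<Longrightarrow> m \<notin> monos_of e \<Longrightarrow> g m = 0"
  unfolding homog_def monos_of_def by blast

lemma homog_lincomb:
  "(\<And>u. u \<in> U \<Longrightarrow> homog e (f u)) \<Longrightarrow> homog e (\<lambda>m. \<Sum>u\<in>U. a u * f u m)"
  unfolding homog_def by simp

lemma homog_diff: "homog e f \<Longrightarrow> homog e g \<Longrightarrow> homog e (\<lambda>m. f m - g m)"
  unfolding homog_def by simp

lemma heval_lincomb:
  "heval e (\<lambda>m. \<Sum>u\<in>U. a u * f u m) v = (\<Sum>u\<in>U. a u * heval e (f u) v)"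
  unfolding heval_def by (simp add: sum_distrib_left sum_distrib_right sum.swap[of _ U] mult.assoc)

lemma heval_diff: "heval e (\<lambda>m. f m - g m) v = heval e f v - heval e g v"
  unfolding heval_def by (simp add: left_diff_distrib sum_subtractf)

lemma mon_eval_smul3: "mon_eval m (smul3 t v) = t ^ mdeg m * mon_eval m v"
  by (cases m; cases v) (simp add: mdeg_def power_add power_mult_distrib)

lemma heval_smul3: "heval e g (smul3 t v) = t ^ e * heval e g v"
  unfolding heval_def sum_distrib_left
  by (rule sum.cong) (auto simp: mon_eval_smul3 monos_of_def)

lemma mon_eval_madd: "mon_eval (madd \<alpha> \<beta>) v = mon_eval \<alpha> v * mon_eval \<beta> v"
  by (cases \<alpha>; cases \<beta>; cases v) (simp add: power_add)

definition form_mult :: "nat \<Rightarrow> form \<Rightarrow> nat \<Rightarrow> form \<Rightarrow> form" where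
  "form_mult e g e' h m =
     (\<Sum>(\<alpha>, \<beta>)\<in>{(\<alpha>, \<beta>)\<in>monos_of e \<times> monos_of e'. madd \<alpha> \<beta> = m}. g \<alpha> * h \<beta>)"

lemma homog_form_mult: "homog (e + e') (form_mult e g e' h)"
  unfolding homog_def form_mult_def by (auto simp: monos_of_def mdeg_def intro!: sum.neutral)

lemma heval_form_mult: "heval (e + e') (form_mult e g e' h) v = heval e g v * heval e' h v"
proof -
  let ?S = "monos_of e \<times> monos_of e'"
  have "(\<lambda>(\<alpha>, \<beta>). madd \<alpha> \<beta>) ` ?S \<subseteq> monos_of (e + e')"
    by (auto simp: monos_of_def mdeg_def)
  then have "heval (e + e') (form_mult e g e' h) v =
      (\<Sum>(\<alpha>, \<beta>)\<in>?S. g \<alpha> * h \<beta> * mon_eval (madd \<alpha> \<beta>) v)"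
    unfolding heval_def form_mult_def sum_distrib_right
    by (subst sum.group[symmetric, of ?S _ "\<lambda>(\<alpha>, \<beta>). madd \<alpha> \<beta>"])
       (auto simp: finite_monos_of case_prod_beta intro!: sum.cong)
  also have "\<dots> = heval e g v * heval e' h v"
    unfolding heval_def sum_product sum.cartesian_product mon_eval_madd
    by (simp add: case_prod_beta mult_ac)
  finally show ?thesis .
qed

definition lin_form :: "pt \<Rightarrow> form" where
  "lin_form w m = (if m = (1, 0, 0) then fst w else if m = (0, 1, 0) then fst (snd w)
     else if m = (0, 0, 1) then snd (snd w) else 0)"

lemma heval_lin_form: "heval 1 (lin_form w) v = dot3 w v"
proof -
  have "monos_of 1 = {(1, 0, 0), (0, 1, 0), (0, 0, 1)}"
    by (auto simp: monos_of_def mdeg_def add_is_1)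
  then show ?thesis by (cases w; cases v) (simp add: heval_def lin_form_def)
qed

lemma exists_form_prod_lin:
  assumes "finite K"
  shows "\<exists>g. homog (card K) g \<and> (\<forall>v. heval (card K) g v = (\<Prod>k\<in>K. dot3 (f k) v))"
  using assms
proof (induction K rule: finite_induct)
  case empty
  define one :: form where "one = (\<lambda>m. if m = (0, 0, 0) then 1 else 0)"
  have "monos_of 0 = {(0, 0, 0)}" by (auto simp: monos_of_def mdeg_def)
  then have "homog 0 one \<and> (\<forall>v. heval 0 one v = 1)"
    by (auto simp: homog_def one_def mdeg_def heval_def)
  then show ?case by auto
next
  case (insert k K)
  then obtain g where "homog (card K) g" "\<forall>v. heval (card K) g v = (\<Prod>k\<in>K. dot3 (f k) v)"
    by blast
  with insert.hyps show ?case
    using homog_form_mult[of 1 "card K" "lin_form (f k)" g]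
      heval_form_mult[of 1 "card K" "lin_form (f k)" g] heval_lin_form
    by (intro exI[of _ "form_mult 1 (lin_form (f k)) (card K) g"]) simp
qed

lemma contract_eq_0_if_deg_gt:
  assumes "homog d F" "d < e"
  shows "contract e g F = (\<lambda>_. 0)"
proof -
  have "F (madd \<alpha> \<gamma>) = 0" if "\<alpha> \<in> monos_of e" for \<alpha> \<gamma>
    using assms that by (cases \<alpha>; cases \<gamma>) (auto simp: homog_def monos_of_def mdeg_def)
  then show ?thesis by (simp add: contract_def fun_eq_iff)
qed

fun mfact :: "mon \<Rightarrow> complex" where
  "mfact (a, b, c) = fact a * fact b * fact c"

lemma mfact_nonzero: "mfact m \<noteq> 0"
  by (cases m) simp

definition apolar_pairing :: "nat \<Rightarrow> form \<Rightarrow> form \<Rightarrow> complex" where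
  "apolar_pairing e g F = (\<Sum>\<alpha>\<in>monos_of e. g \<alpha> * mfact \<alpha> * F \<alpha>)"

lemma contract_at_origin: "contract e g F (0, 0, 0) = apolar_pairing e g F"
  unfolding contract_def apolar_pairing_def
  by (rule sum.cong) (auto elim!: mfact.elims)

lemma apolar_pairing_diff:
  "apolar_pairing e (\<lambda>m. f m - g m) F = apolar_pairing e f F - apolar_pairing e g F"
  unfolding apolar_pairing_def by (simp add: left_diff_distrib sum_subtractf)

lemma apolar_pairing_lincomb:
  "apolar_pairing e (\<lambda>m. \<Sum>u\<in>U. a u * f u m) F = (\<Sum>u\<in>U. a u * apolar_pairing e (f u) F)"
  unfolding apolar_pairing_def
  by (simp add: sum_distrib_left sum_distrib_right sum.swap[of _ U] mult.assoc)

lemma apolar_pairing_eq_0: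
  assumes "apolar X F" "homog e g" "\<forall>v\<in>X. heval e g v = 0"
  shows "apolar_pairing e g F = 0"
  using assms contract_at_origin[of e g F] unfolding apolar_def by fastforce

definition mono_form :: "mon \<Rightarrow> form" where
  "mono_form \<beta> m = (if m = \<beta> then 1 else 0)"

lemma homog_mono_form: "\<beta> \<in> monos_of d \<Longrightarrow> homog d (mono_form \<beta>)"
  by (auto simp: homog_def mono_form_def monos_of_def)

lemma heval_mono_form: "\<beta> \<in> monos_of d \<Longrightarrow> heval d (mono_form \<beta>) v = mon_eval \<beta> v"
  by (simp add: heval_def mono_form_def sum_delta_mult finite_monos_of)

lemma apolar_pairing_mono_form:
  "\<beta> \<in> monos_of d \<Longrightarrow> apolar_pairing d (mono_form \<beta>) F = mfact \<beta> * F \<beta>"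
  by (simp add: apolar_pairing_def mono_form_def sum_delta_mult finite_monos_of mult.assoc)

section \<open>Vectors in \<open>\<complex>\<^sup>3\<close>\<close>

fun cross :: "pt \<Rightarrow> pt \<Rightarrow> pt" where
  "cross (a0, a1, a2) (b0, b1, b2) = (a1 * b2 - a2 * b1, a2 * b0 - a0 * b2, a0 * b1 - a1 * b0)"

lemma dot3_cross_left: "dot3 a (cross a b) = 0"
  by (cases a; cases b) (simp add: algebra_simps)

lemma dot3_cross_right: "dot3 b (cross a b) = 0"
  by (cases a; cases b) (simp add: algebra_simps)

lemma cross_commute: "cross b a = smul3 (- 1) (cross a b)"
  by (cases a; cases b) simp

lemma cross_smul3: "cross (smul3 s a) (smul3 t b) = smul3 (s * t) (cross a b)"
  by (cases a; cases b) (simp add: algebra_simps)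

lemma smul3_smul3: "smul3 s (smul3 t v) = smul3 (s * t) v"
  by (cases v) (simp add: algebra_simps)

lemma exists_dot3_nonzero:
  assumes "v \<noteq> (0, 0, 0)"
  shows "\<exists>w. dot3 w v \<noteq> 0"
proof -
  obtain v0 v1 v2 where v: "v = (v0, v1, v2)" by (cases v)
  with assms have "dot3 (1, 0, 0) v \<noteq> 0 \<or> dot3 (0, 1, 0) v \<noteq> 0 \<or> dot3 (0, 0, 1) v \<noteq> 0"
    by auto
  then show ?thesis by blast
qed

lemma indep3_imp_indep2: "indep3 a b c \<Longrightarrow> indep2 a b"
  unfolding indep3_def indep2_def
proof (intro allI impI)
  fix x y
  assume "\<forall>x y z. add3 (add3 (smul3 x a) (smul3 y b)) (smul3 z c) = (0, 0, 0) \<longrightarrow> x = 0 \<and> y = 0 \<and> z = 0"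
    and "add3 (smul3 x a) (smul3 y b) = (0, 0, 0)"
  moreover have "add3 (add3 (smul3 x a) (smul3 y b)) (smul3 0 c) = add3 (smul3 x a) (smul3 y b)"
    by (cases c; cases "add3 (smul3 x a) (smul3 y b)") simp
  ultimately show "x = 0 \<and> y = 0" by metis
qed

lemma cross_nonzero_if_indep2:
  assumes "indep2 a b"
  shows "cross a b \<noteq> (0, 0, 0)"
proof
  assume "cross a b = (0, 0, 0)"
  obtain a0 a1 a2 b0 b1 b2 where ab: "a = (a0, a1, a2)" "b = (b0, b1, b2)"
    by (cases a; cases b) auto
  have c: "a1 * b2 - a2 * b1 = 0" "a2 * b0 - a0 * b2 = 0" "a0 * b1 - a1 * b0 = 0"
    using \<open>cross a b = (0, 0, 0)\<close> by (simp_all add: ab)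
  have indep: "x = 0" if "add3 (smul3 x a) (smul3 y b) = (0, 0, 0)" for x y
    using assms that unfolding indep2_def by blast
  have comb: "add3 (smul3 x a) (smul3 y b) = (x * a0 + y * b0, x * a1 + y * b1, x * a2 + y * b2)" for x y
    by (simp add: ab)
  \<comment> \<open>\<open>b\<^sub>i a - a\<^sub>i b = 0\<close>: its coordinates are those of \<open>\<plusminus>cross a b\<close>.\<close>
  have "b0 * a0 + (- a0) * b0 = 0" "b0 * a1 + (- a0) * b1 = 0" "b0 * a2 + (- a0) * b2 = 0"
       "b1 * a0 + (- a1) * b0 = 0" "b1 * a1 + (- a1) * b1 = 0" "b1 * a2 + (- a1) * b2 = 0"
       "b2 * a0 + (- a2) * b0 = 0" "b2 * a1 + (- a2) * b1 = 0" "b2 * a2 + (- a2) * b2 = 0"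
    using c by (simp_all add: algebra_simps)
  then have "b0 = 0" "b1 = 0" "b2 = 0"
    using indep[of b0 "- a0"] indep[of b1 "- a1"] indep[of b2 "- a2"] by (simp_all only: comb)
  then have "add3 (smul3 0 a) (smul3 1 b) = (0, 0, 0)" by (simp add: comb)
  then show False using assms unfolding indep2_def by fastforce
qed

lemma triple_product_nonzero_if_indep3:
  assumes "indep3 a b c"
  shows "dot3 c (cross a b) \<noteq> 0"
proof
  assume det: "dot3 c (cross a b) = 0"
  obtain a0 a1 a2 b0 b1 b2 c0 c1 c2
    where abc: "a = (a0, a1, a2)" "b = (b0, b1, b2)" "c = (c0, c1, c2)"
    by (cases a; cases b; cases c) auto
  have indep: "z = 0" if "add3 (add3 (smul3 x a) (smul3 y b)) (smul3 z c) = (0, 0, 0)" for x y z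
    using assms that unfolding indep3_def by blast
  have dd: "c0 * (a1 * b2 - a2 * b1) + c1 * (a2 * b0 - a0 * b2) + c2 * (a0 * b1 - a1 * b0) = 0"
    using det by (simp add: abc)
  \<comment> \<open>The columns of the adjugate matrix give relations whose \<open>c\<close>-coefficients are the
      coordinates of \<open>cross a b\<close>; they are relations because the determinant vanishes.\<close>
  have rel: "add3 (add3 (smul3 (b1 * c2 - b2 * c1) a) (smul3 (c1 * a2 - c2 * a1) b)) (smul3 (a1 * b2 - a2 * b1) c) = (0, 0, 0)"
       "add3 (add3 (smul3 (b2 * c0 - b0 * c2) a) (smul3 (c2 * a0 - c0 * a2) b)) (smul3 (a2 * b0 - a0 * b2) c) = (0, 0, 0)"
       "add3 (add3 (smul3 (b0 * c1 - b1 * c0) a) (smul3 (c0 * a1 - c1 * a0) b)) (smul3 (a0 * b1 - a1 * b0) c) = (0, 0, 0)"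
    unfolding abc using dd
    by (simp only: add3.simps smul3.simps prod.inject; intro conjI; simp add: algebra_simps)+
  have "cross a b = (0, 0, 0)"
    using indep[OF rel(1)] indep[OF rel(2)] indep[OF rel(3)] by (simp add: abc)
  with cross_nonzero_if_indep2[OF indep3_imp_indep2[OF assms]] show False by simp
qed

lemma multiple_of_cross:
  assumes "dot3 a v = 0" "dot3 b v = 0" "cross a b \<noteq> (0, 0, 0)"
  shows "\<exists>t. v = smul3 t (cross a b)"
proof -
  obtain a0 a1 a2 b0 b1 b2 v0 v1 v2
    where abv: "a = (a0, a1, a2)" "b = (b0, b1, b2)" "v = (v0, v1, v2)"
    by (cases a; cases b; cases v) auto
  obtain c0 c1 c2 where cr: "cross a b = (c0, c1, c2)" by (cases "cross a b")
  have c: "c0 = a1 * b2 - a2 * b1" "c1 = a2 * b0 - a0 * b2" "c2 = a0 * b1 - a1 * b0"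
    using cr by (simp_all add: abv)
  have av: "a0 * v0 + a1 * v1 + a2 * v2 = 0" and bv: "b0 * v0 + b1 * v1 + b2 * v2 = 0"
    using assms(1,2) by (simp_all add: abv)
  \<comment> \<open>The \<open>2 \<times> 2\<close> minors of \<open>(c, v)\<close> are combinations of \<open>dot3 a v\<close> and \<open>dot3 b v\<close>.\<close>
  have "c1 * v2 - c2 * v1 = b0 * (a0 * v0 + a1 * v1 + a2 * v2) - a0 * (b0 * v0 + b1 * v1 + b2 * v2)"
       "c2 * v0 - c0 * v2 = b1 * (a0 * v0 + a1 * v1 + a2 * v2) - a1 * (b0 * v0 + b1 * v1 + b2 * v2)"
       "c0 * v1 - c1 * v0 = b2 * (a0 * v0 + a1 * v1 + a2 * v2) - a2 * (b0 * v0 + b1 * v1 + b2 * v2)"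
    unfolding c by (simp_all add: algebra_simps)
  then have minors: "c1 * v2 = c2 * v1" "c2 * v0 = c0 * v2" "c0 * v1 = c1 * v0"
    using av bv by simp_all
  show ?thesis
  proof (cases "c0 \<noteq> 0")
    case True
    with minors have "v = smul3 (v0 / c0) (c0, c1, c2)" by (simp add: abv field_simps)
    then show ?thesis unfolding cr ..
  next
    case c0: False
    show ?thesis
    proof (cases "c1 \<noteq> 0")
      case True
      with minors c0 have "v = smul3 (v1 / c1) (c0, c1, c2)" by (simp add: abv field_simps)
      then show ?thesis unfolding cr ..
    next
      case False
      with c0 assms(3) cr have "c2 \<noteq> 0" by auto
      with minors c0 False have "v = smul3 (v2 / c2) (c0, c1, c2)" by (simp add: abv field_simps)
      then show ?thesis unfolding cr ..
    qed
  qed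
qed

section \<open>Star configurations and their separating forms\<close>

definition star_pairs :: "nat \<Rightarrow> (nat \<times> nat) set" where
  "star_pairs r = {(i, j). i < j \<and> j < r}"

definition crossing :: "(nat \<Rightarrow> pt) \<Rightarrow> nat \<times> nat \<Rightarrow> pt" where
  "crossing l p = cross (l (fst p)) (l (snd p))"

lemma finite_star_pairs: "finite (star_pairs r)"
proof -
  have "star_pairs r \<subseteq> {..<r} \<times> {..<r}" by (auto simp: star_pairs_def)
  then show ?thesis by (rule finite_subset) auto
qed

lemma card_star_pairs: "2 * card (star_pairs r) = r * (r - 1)"
proof (induction r)
  case 0
  then show ?case by (simp add: star_pairs_def)
next
  case (Suc r)
  have eq: "star_pairs (Suc r) = star_pairs r \<union> (\<lambda>i. (i, r)) ` {..<r}"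
    by (auto simp: star_pairs_def)
  have "card (star_pairs (Suc r)) = card (star_pairs r) + r"
    unfolding eq using finite_star_pairs[of r]
    by (subst card_Un_disjoint) (auto simp: star_pairs_def card_image inj_on_def)
  with Suc show ?case by (cases r) (auto simp: algebra_simps)
qed

lemma card_star_pairs_eq_card_monos_of: "card (star_pairs (e + 2)) = card (monos_of e)"
  using card_star_pairs[of "e + 2"] card_monos_of[of e] by (simp add: algebra_simps)

lemma star_lines_mono: "star_lines r l \<Longrightarrow> r' \<le> r \<Longrightarrow> star_lines r' l"
  unfolding star_lines_def by auto

lemma star_points_mono: "r' \<le> r \<Longrightarrow> star_points r' l \<subseteq> star_points r l"
  unfolding star_points_def by (intro Collect_mono) (meson order_less_le_trans)

lemma crossing_nonzero:
  assumes "star_lines r l" "p \<in> star_pairs r"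
  shows "crossing l p \<noteq> (0, 0, 0)"
  unfolding crossing_def using assms
  by (intro cross_nonzero_if_indep2) (auto simp: star_lines_def star_pairs_def)

lemma crossing_in_star_points:
  assumes "star_lines r l" "p \<in> star_pairs r"
  shows "crossing l p \<in> star_points r l"
proof -
  obtain i j where "p = (i, j)" "i < j" "j < r" using assms(2) by (auto simp: star_pairs_def)
  moreover have "dot3 (l i) (cross (l i) (l j)) = 0" "dot3 (l j) (cross (l i) (l j)) = 0"
    by (rule dot3_cross_left, rule dot3_cross_right)
  ultimately show ?thesis
    using crossing_nonzero[OF assms] unfolding star_points_def crossing_def
    by (intro CollectI conjI exI[of _ i] exI[of _ j]) auto
qed

lemma star_points_are_crossings:
  assumes "star_lines r l" "v \<in> star_points r l"
  shows "\<exists>p\<in>star_pairs r. \<exists>t. v = smul3 t (crossing l p)"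
proof -
  obtain i j where ij: "i < r" "j < r" "i \<noteq> j" "dot3 (l i) v = 0" "dot3 (l j) v = 0"
    using assms(2) unfolding star_points_def by blast
  with assms(1) have "cross (l i) (l j) \<noteq> (0, 0, 0)"
    by (intro cross_nonzero_if_indep2) (auto simp: star_lines_def)
  with ij obtain t where t: "v = smul3 t (cross (l i) (l j))"
    using multiple_of_cross[of "l i" v "l j"] by blast
  show ?thesis
  proof (cases "i < j")
    case True
    with ij t show ?thesis
      by (intro bexI[of _ "(i, j)"] exI[of _ t]) (auto simp: star_pairs_def crossing_def)
  next
    case False
    with ij have "(j, i) \<in> star_pairs r" by (auto simp: star_pairs_def)
    moreover have "v = smul3 (- t) (crossing l (j, i))"
      using t by (simp add: crossing_def cross_commute[of "l i"] smul3_smul3)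
    ultimately show ?thesis by (intro bexI[of _ "(j, i)"] exI[of _ "- t"])
  qed
qed

lemma vanishes_on_star_points_iff:
  assumes "star_lines r l"
  shows "(\<forall>v\<in>star_points r l. heval e g v = 0) \<longleftrightarrow> (\<forall>p\<in>star_pairs r. heval e g (crossing l p) = 0)"
proof
  assume "\<forall>v\<in>star_points r l. heval e g v = 0"
  then show "\<forall>p\<in>star_pairs r. heval e g (crossing l p) = 0"
    using crossing_in_star_points[OF assms] by blast
next
  assume crossings: "\<forall>p\<in>star_pairs r. heval e g (crossing l p) = 0"
  show "\<forall>v\<in>star_points r l. heval e g v = 0"
  proof
    fix v assume "v \<in> star_points r l"
    then obtain p t where "p \<in> star_pairs r" "v = smul3 t (crossing l p)"
      using star_points_are_crossings[OF assms] by blast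
    with crossings show "heval e g v = 0" by (simp add: heval_smul3)
  qed
qed

lemma dot3_crossing_nonzero:
  assumes "star_lines r l" "p \<in> star_pairs r" "k < r" "k \<notin> {fst p, snd p}"
  shows "dot3 (l k) (crossing l p) \<noteq> 0"
  using assms unfolding star_lines_def star_pairs_def crossing_def
  by (intro triple_product_nonzero_if_indep3) auto

lemma dot3_crossing_eq_0: "k \<in> {fst p, snd p} \<Longrightarrow> dot3 (l k) (crossing l p) = 0"
  unfolding crossing_def by (auto intro: dot3_cross_left dot3_cross_right)

definition separating_forms :: "nat \<Rightarrow> 'p set \<Rightarrow> ('p \<Rightarrow> pt) \<Rightarrow> ('p \<Rightarrow> form) \<Rightarrow> bool" where
  "separating_forms e S P u \<longleftrightarrow> (\<forall>p\<in>S. homog e (u p) \<and> heval e (u p) (P p) \<noteq> 0 \<and>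
      (\<forall>p'\<in>S. p' \<noteq> p \<longrightarrow> heval e (u p) (P p') = 0))"

lemma separating_forms_sum:
  assumes "separating_forms e S P u" "finite S" "p \<in> S"
  shows "(\<Sum>p'\<in>S. a p' * heval e (u p') (P p)) = a p * heval e (u p) (P p)"
proof -
  have "heval e (u p') (P p) = 0" if "p' \<in> S" "p' \<noteq> p" for p'
    using assms(1,3) that unfolding separating_forms_def by (metis (no_types))
  with assms(2,3) show ?thesis by (subst sum.remove) (auto intro!: sum.neutral)
qed

text \<open>For the crossing \<open>p = (i, j)\<close> take the product of the other \<open>r - 2\<close> lines, padded to
  degree \<open>e\<close> by a power of a linear form not vanishing at the crossing.\<close>
lemma exists_star_separating_form:
  assumes l: "star_lines r l" "r \<le> e + 2" and p: "p \<in> star_pairs r"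
  shows "\<exists>u. homog e u \<and> heval e u (crossing l p) \<noteq> 0 \<and>
    (\<forall>p'\<in>star_pairs r. p' \<noteq> p \<longrightarrow> heval e u (crossing l p') = 0)"
proof -
  define K where "K = {..<r} - {fst p, snd p}"
  define s where "s = e - card K"
  have "card K = r - 2" using p by (auto simp: K_def star_pairs_def card_Diff_subset)
  then have deg: "card K + card {..<s} = e" using l(2) by (simp add: s_def)
  obtain w where w: "dot3 w (crossing l p) \<noteq> 0"
    using exists_dot3_nonzero[OF crossing_nonzero[OF l(1) p]] by blast
  obtain g1 where g1: "homog (card K) g1" "\<And>v. heval (card K) g1 v = (\<Prod>k\<in>K. dot3 (l k) v)"
    using exists_form_prod_lin[of K l] by (auto simp: K_def)
  obtain g2 where g2: "homog (card {..<s}) g2" "\<And>v. heval (card {..<s}) g2 v = (\<Prod>k<s. dot3 w v)"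
    using exists_form_prod_lin[of "{..<s}" "\<lambda>_. w"] by auto
  define u where "u = form_mult (card K) g1 (card {..<s}) g2"
  have hu: "heval e u v = (\<Prod>k\<in>K. dot3 (l k) v) * dot3 w v ^ s" for v
    using heval_form_mult[where e = "card K" and g = g1 and e' = "card {..<s}" and h = g2] g1 g2 deg
    by (simp add: u_def)
  have "heval e u (crossing l p) \<noteq> 0"
    using w dot3_crossing_nonzero[OF l(1) p] by (simp add: hu K_def)
  moreover have "heval e u (crossing l p') = 0" if "p' \<in> star_pairs r" "p' \<noteq> p" for p'
  proof -
    \<comment> \<open>one of the two lines through \<open>p'\<close> is a factor of \<open>u\<close>\<close>
    from that p have "fst p' \<notin> {fst p, snd p} \<or> snd p' \<notin> {fst p, snd p}"
      by (auto simp: star_pairs_def prod_eq_iff)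
    moreover have "fst p' < r" "snd p' < r" using that(1) by (auto simp: star_pairs_def)
    ultimately obtain k where "k \<in> K" "k \<in> {fst p', snd p'}"
      by (auto simp: K_def)
    then show ?thesis
      using dot3_crossing_eq_0[of k p' l] by (auto simp: hu K_def)
  qed
  ultimately show ?thesis using homog_form_mult deg u_def by metis
qed

lemma exists_star_separating_forms:
  assumes "star_lines r l" "r \<le> e + 2"
  shows "\<exists>u. separating_forms e (star_pairs r) (crossing l) u"
  using exists_star_separating_form[OF assms] unfolding separating_forms_def by metis

lemma form_eq_0_if_vanishes_at_separated_points:
  assumes S: "finite S" "card S = card (monos_of e)"
    and u: "separating_forms e S P u"
    and h: "homog e h" "\<forall>p\<in>S. heval e h (P p) = 0"
  shows "h = (\<lambda>_. 0)"
proof -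
  \<comment> \<open>The \<open>card S + 1\<close> forms \<open>h\<close> and \<open>u p\<close> are linearly dependent; evaluating a relation
      at the points \<open>P p\<close> kills all coefficients but the one of \<open>h\<close>.\<close>
  define U where "U = insert None (Some ` S)"
  define f where "f = (\<lambda>j. case j of None \<Rightarrow> h | Some p \<Rightarrow> u p)"
  have U: "finite U" "card (monos_of e) < card U"
    using S by (simp_all add: U_def card_image)
  obtain q where q: "\<exists>j\<in>U. q j \<noteq> 0" "\<forall>\<beta>\<in>monos_of e. (\<Sum>j\<in>U. f j \<beta> * q j) = 0"
    using exists_nontrivial_solution[OF finite_monos_of U, where c = "\<lambda>\<beta> j. f j \<beta>"] by blast
  define G where "G = (\<lambda>m. \<Sum>j\<in>U. q j * f j m)"
  have "homog e G"
    unfolding G_def using h(1) u by (intro homog_lincomb) (auto simp: U_def f_def separating_forms_def)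
  have G: "G m = 0" for m
  proof (cases "m \<in> monos_of e")
    case True
    with q(2) show ?thesis by (simp add: G_def mult.commute)
  next
    case False
    with \<open>homog e G\<close> show ?thesis by (rule homog_eq_0_outside)
  qed
  have "q (Some p) = 0" if p: "p \<in> S" for p
  proof -
    have "0 = heval e G (P p)" by (simp add: G heval_def)
    also have "\<dots> = (\<Sum>j\<in>U. q j * heval e (f j) (P p))"
      unfolding G_def heval_lincomb ..
    also have "\<dots> = (\<Sum>p'\<in>S. q (Some p') * heval e (u p') (P p))"
      using S h(2) p by (simp add: U_def f_def sum.reindex)
    also have "\<dots> = q (Some p) * heval e (u p) (P p)"
      using separating_forms_sum[OF u S(1) p] .
    finally show ?thesis using u p by (simp add: separating_forms_def)
  qed
  with q(1) have "q None \<noteq> 0" by (auto simp: U_def)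
  moreover have "G m = q None * h m" for m
    using S \<open>\<And>p. p \<in> S \<Longrightarrow> q (Some p) = 0\<close> by (simp add: G_def U_def f_def sum.reindex)
  ultimately show ?thesis using G by (simp add: fun_eq_iff)
qed

lemma star_points_vanishing_forms_eq_0:
  assumes l: "star_lines r l" and e: "e + 2 \<le> r"
    and g: "homog e g" "\<forall>v\<in>star_points r l. heval e g v = 0"
  shows "g = (\<lambda>_. 0)"
proof -
  have l': "star_lines (e + 2) l" using star_lines_mono[OF l e] .
  obtain u where "separating_forms e (star_pairs (e + 2)) (crossing l) u"
    using exists_star_separating_forms[OF l'] by auto
  moreover have "\<forall>p\<in>star_pairs (e + 2). heval e g (crossing l p) = 0"
    using g(2) star_points_mono[OF e] vanishes_on_star_points_iff[OF l'] by blast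
  ultimately show ?thesis
    using form_eq_0_if_vanishes_at_separated_points[OF finite_star_pairs
        card_star_pairs_eq_card_monos_of _ g(1)] by blast
qed

lemma apolar_star_points:
  assumes "star_lines r l" "d + 2 \<le> r" "homog d F"
  shows "apolar (star_points r l) F"
  unfolding apolar_def
proof (intro allI impI)
  fix e g assume g: "homog e g" "\<forall>v\<in>star_points r l. heval e g v = 0"
  show "contract e g F = (\<lambda>_. 0)"
  proof (cases "e \<le> d")
    case True
    with assms have "g = (\<lambda>_. 0)"
      by (intro star_points_vanishing_forms_eq_0[OF assms(1) _ g]) auto
    then show ?thesis by (simp add: contract_def)
  next
    case False
    then show ?thesis using contract_eq_0_if_deg_gt[OF assms(3)] by simp
  qed
qed

lemma vandermonde3:
  fixes x y z a b c :: complex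
  assumes "x \<noteq> y" "y \<noteq> z" "x \<noteq> z"
    and "a + b + c = 0" "a * x + b * y + c * z = 0" "a * x\<^sup>2 + b * y\<^sup>2 + c * z\<^sup>2 = 0"
  shows "a = 0 \<and> b = 0 \<and> c = 0"
proof -
  have "c * ((z - x) * (z - y)) = (a * x\<^sup>2 + b * y\<^sup>2 + c * z\<^sup>2) - (x + y) * (a * x + b * y + c * z) + x * y * (a + b + c)"
       "b * ((y - x) * (y - z)) = (a * x\<^sup>2 + b * y\<^sup>2 + c * z\<^sup>2) - (x + z) * (a * x + b * y + c * z) + x * z * (a + b + c)"
    by (simp_all add: algebra_simps power2_eq_square)
  with assms have "c = 0" "b = 0" by simp_all
  with assms show ?thesis by simp
qed

lemma star_lines_moment_curve: "star_lines r (\<lambda>i. (1, of_nat i, (of_nat i)\<^sup>2))"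
  unfolding star_lines_def
proof (intro conjI allI impI)
  fix i j k assume "i < r" "j < r" "k < r" "i \<noteq> j \<and> j \<noteq> k \<and> i \<noteq> k"
  then have distinct: "(of_nat i :: complex) \<noteq> of_nat j" "(of_nat j :: complex) \<noteq> of_nat k"
    "(of_nat i :: complex) \<noteq> of_nat k" by auto
  show "indep3 (1, of_nat i, (of_nat i)\<^sup>2) (1, of_nat j, (of_nat j)\<^sup>2) (1, of_nat k, (of_nat k)\<^sup>2)"
    unfolding indep3_def
  proof (intro allI impI)
    fix a b c
    assume "add3 (add3 (smul3 a (1, of_nat i, (of_nat i)\<^sup>2)) (smul3 b (1, of_nat j, (of_nat j)\<^sup>2)))
      (smul3 c (1, of_nat k, (of_nat k)\<^sup>2)) = (0, 0, 0)"
    then have "a + b + c = 0" "a * of_nat i + b * of_nat j + c * of_nat k = 0"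
      "a * (of_nat i)\<^sup>2 + b * (of_nat j)\<^sup>2 + c * (of_nat k)\<^sup>2 = (0 :: complex)"
      by simp_all
    then show "a = 0 \<and> b = 0 \<and> c = 0" using vandermonde3[OF distinct] by blast
  qed
next
  fix i j assume "i < r" "j < r" "i \<noteq> j"
  then have distinct: "(of_nat i :: complex) \<noteq> of_nat j" by auto
  show "indep2 (1, of_nat i, (of_nat i)\<^sup>2) (1, of_nat j, (of_nat j)\<^sup>2)"
    unfolding indep2_def
  proof (intro allI impI)
    fix a b
    assume "add3 (smul3 a (1, of_nat i, (of_nat i)\<^sup>2)) (smul3 b (1, of_nat j, (of_nat j)\<^sup>2)) = (0, 0, 0)"
    then have ab: "a + b = 0" "a * of_nat i + b * of_nat j = (0 :: complex)" by simp_all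
    have "b * (of_nat j - of_nat i) = (a * of_nat i + b * of_nat j) - of_nat i * (a + b)"
      by (simp add: algebra_simps)
    with ab distinct have "b = 0" by simp
    with ab show "a = 0 \<and> b = 0" by simp
  qed
qed

section \<open>Forms apolar to a star configuration are sums of powers\<close>

text \<open>\<open>lin_power_coeff d w \<beta>\<close> is the coefficient of \<open>x\<^sup>\<beta>\<close> in \<open>(w\<^sub>0 x\<^sub>0 + w\<^sub>1 x\<^sub>1 + w\<^sub>2 x\<^sub>2)\<^sup>d\<close>.\<close>
definition lin_power_coeff :: "nat \<Rightarrow> pt \<Rightarrow> mon \<Rightarrow> complex" where
  "lin_power_coeff d w \<beta> = fact d / mfact \<beta> * mon_eval \<beta> w"

lemma lin_power_coeff_smul3:
  "mdeg \<beta> = d \<Longrightarrow> lin_power_coeff d (smul3 t w) \<beta> = t ^ d * lin_power_coeff d w \<beta>"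
  by (simp add: lin_power_coeff_def mon_eval_smul3)

text \<open>For each monomial \<open>x\<^sup>\<beta>\<close> some \<open>x\<^sup>\<beta> - (\<Sum>p. a\<^sub>p u\<^sub>p)\<close>, with \<open>u\<close> separating the crossings, vanishes on
  the star configuration; so its apolar pairing with \<open>F\<close> is zero, which determines \<open>F \<beta>\<close>.\<close>
lemma apolar_star_points_imp_sum_of_powers:
  assumes l: "star_lines r l" "r \<le> d + 2"
    and F: "apolar (star_points r l) F"
  shows "\<exists>c. \<forall>\<beta>\<in>monos_of d. F \<beta> = (\<Sum>p\<in>star_pairs r. c p * lin_power_coeff d (crossing l p) \<beta>)"
proof -
  let ?P = "crossing l"
  obtain u where u: "separating_forms d (star_pairs r) ?P u"
    using exists_star_separating_forms[OF l] by blast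
  define c where "c p = apolar_pairing d (u p) F / (fact d * heval d (u p) (?P p))" for p
  have "F \<beta> = (\<Sum>p\<in>star_pairs r. c p * lin_power_coeff d (?P p) \<beta>)" if \<beta>: "\<beta> \<in> monos_of d" for \<beta>
  proof -
    define a where "a p = mon_eval \<beta> (?P p) / heval d (u p) (?P p)" for p
    define g where "g m = mono_form \<beta> m - (\<Sum>p\<in>star_pairs r. a p * u p m)" for m
    have "homog d g"
      unfolding g_def using \<beta> u
      by (intro homog_diff homog_lincomb homog_mono_form) (auto simp: separating_forms_def)
    moreover have "heval d g (?P p) = 0" if p: "p \<in> star_pairs r" for p
    proof -
      have "(\<Sum>p'\<in>star_pairs r. a p' * heval d (u p') (?P p)) = a p * heval d (u p) (?P p)"
        using separating_forms_sum[OF u finite_star_pairs p] .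
      also have "\<dots> = mon_eval \<beta> (?P p)"
        using u p by (simp add: a_def separating_forms_def)
      finally show ?thesis
        unfolding g_def heval_diff heval_lincomb heval_mono_form[OF \<beta>] by simp
    qed
    ultimately have "apolar_pairing d g F = 0"
      using F apolar_pairing_eq_0 vanishes_on_star_points_iff[OF l(1)] by blast
    moreover have "a p * apolar_pairing d (u p) F = mfact \<beta> * (c p * lin_power_coeff d (?P p) \<beta>)"
      if "p \<in> star_pairs r" for p
      using u that mfact_nonzero[of \<beta>]
      by (simp add: a_def c_def lin_power_coeff_def separating_forms_def)
    ultimately have "mfact \<beta> * F \<beta> = mfact \<beta> * (\<Sum>p\<in>star_pairs r. c p * lin_power_coeff d (?P p) \<beta>)"
      unfolding g_def apolar_pairing_diff apolar_pairing_lincomb apolar_pairing_mono_form[OF \<beta>]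
        sum_distrib_left by simp
    then show ?thesis using mfact_nonzero[of \<beta>] by simp
  qed
  then show ?thesis by blast
qed

definition chart_vec :: "nat \<Rightarrow> complex \<Rightarrow> complex \<Rightarrow> pt" where
  "chart_vec k a b = (if k = 0 then (1, a, b) else if k = 1 then (a, 1, b) else (a, b, 1))"

lemma exists_chart_vec: "\<exists>k s a b. k < 3 \<and> v = smul3 s (chart_vec k a b)"
proof -
  obtain v0 v1 v2 where v: "v = (v0, v1, v2)" by (cases v)
  consider "v0 \<noteq> 0" | "v0 = 0" "v1 \<noteq> 0" | "v0 = 0" "v1 = 0" by blast
  then show ?thesis
  proof cases
    case 1
    then have "v = smul3 v0 (chart_vec 0 (v1 / v0) (v2 / v0))" by (simp add: v chart_vec_def)
    then show ?thesis by force
  next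
    case 2
    then have "v = smul3 v1 (chart_vec 1 0 (v2 / v1))" by (simp add: v chart_vec_def)
    then show ?thesis by force
  next
    case 3
    then have "v = smul3 v2 (chart_vec 2 0 0)" by (simp add: v chart_vec_def)
    then show ?thesis by force
  qed
qed

text \<open>Parameters of a star configuration together with a linear combination of the \<open>d\<close>-th
  powers of its crossings: a coefficient \<open>Inl p\<close> for each crossing \<open>p\<close>, and for each line
  two affine coordinates \<open>Inr (i, _)\<close> in the chart \<open>k i\<close>.\<close>
type_synonym param = "(nat \<times> nat) + (nat \<times> bool)"

definition param_vars :: "nat \<Rightarrow> param set" where
  "param_vars r = Inl ` star_pairs r \<union> Inr ` ({..<r} \<times> UNIV)"

definition charts :: "nat \<Rightarrow> (nat \<Rightarrow> nat) set" where
  "charts r = PiE {..<r} (\<lambda>_. {..<3})"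

definition chart_line :: "(nat \<Rightarrow> nat) \<Rightarrow> (param \<Rightarrow> complex) \<Rightarrow> nat \<Rightarrow> pt" where
  "chart_line k x i = chart_vec (k i) (x (Inr (i, False))) (x (Inr (i, True)))"

definition star_power_sum :: "nat \<Rightarrow> nat \<Rightarrow> (nat \<Rightarrow> nat) \<Rightarrow> mon \<Rightarrow> (param \<Rightarrow> complex) \<Rightarrow> complex" where
  "star_power_sum r d k \<beta> x =
     (\<Sum>p\<in>star_pairs r. x (Inl p) * lin_power_coeff d (crossing (chart_line k x) p) \<beta>)"

lemma finite_param_vars: "finite (param_vars r)"
  by (simp add: param_vars_def finite_star_pairs)

lemma card_param_vars: "card (param_vars r) = card (star_pairs r) + 2 * r"
proof -
  have "card (Inr ` ({..<r} \<times> (UNIV :: bool set)) :: param set) = 2 * r"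
    by (simp add: card_image card_cartesian_product)
  then show ?thesis
    unfolding param_vars_def
    by (subst card_Un_disjoint) (auto simp: finite_star_pairs card_image)
qed

lemma finite_charts: "finite (charts r)"
  unfolding charts_def by (intro finite_PiE) auto

lemma apolar_star_points_imp_star_power_sum:
  assumes "star_lines r l" "r \<le> d + 2" "apolar (star_points r l) F"
  shows "\<exists>k\<in>charts r. \<exists>x. \<forall>\<beta>\<in>monos_of d. F \<beta> = star_power_sum r d k \<beta> x"
proof -
  obtain c where c: "\<forall>\<beta>\<in>monos_of d. F \<beta> = (\<Sum>p\<in>star_pairs r. c p * lin_power_coeff d (crossing l p) \<beta>)"
    using apolar_star_points_imp_sum_of_powers[OF assms] by blast
  have "\<forall>i. \<exists>k s a b. k < 3 \<and> l i = smul3 s (chart_vec k a b)"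
    using exists_chart_vec by blast
  then obtain K s a b where ksab: "\<forall>i. K i < 3 \<and> l i = smul3 (s i) (chart_vec (K i) (a i) (b i))"
    by metis
  define k where "k = restrict K {..<r}"
  define x :: "param \<Rightarrow> complex" where
    "x = case_sum (\<lambda>(i, j). c (i, j) * (s i * s j) ^ d) (\<lambda>(i, t). if t then b i else a i)"
  have "k \<in> charts r" using ksab by (auto simp: k_def charts_def)
  moreover have "F \<beta> = star_power_sum r d k \<beta> x" if \<beta>: "\<beta> \<in> monos_of d" for \<beta>
    unfolding c[rule_format, OF \<beta>] star_power_sum_def
  proof (rule sum.cong[OF refl])
    fix p assume "p \<in> star_pairs r"
    then obtain i j where p: "p = (i, j)" "i < r" "j < r" by (auto simp: star_pairs_def)
    with ksab have "crossing l p = smul3 (s i * s j) (crossing (chart_line k x) p)"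
      by (simp add: crossing_def chart_line_def k_def x_def cross_smul3)
    with \<beta> p show "c p * lin_power_coeff d (crossing l p) \<beta> =
        x (Inl p) * lin_power_coeff d (crossing (chart_line k x) p) \<beta>"
      by (simp add: lin_power_coeff_smul3 monos_of_def x_def)
  qed
  ultimately show ?thesis by blast
qed

definition poly_pt_deg_le :: "'v set \<Rightarrow> nat \<Rightarrow> (('v \<Rightarrow> complex) \<Rightarrow> pt) \<Rightarrow> bool" where
  "poly_pt_deg_le V E P \<longleftrightarrow> poly_deg_le V E (\<lambda>x. fst (P x)) \<and> poly_deg_le V E (\<lambda>x. fst (snd (P x))) \<and>
     poly_deg_le V E (\<lambda>x. snd (snd (P x)))"

lemma poly_pt_deg_le_cross:
  assumes "finite V" "poly_pt_deg_le V E P" "poly_pt_deg_le V E' Q"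
  shows "poly_pt_deg_le V (E + E') (\<lambda>x. cross (P x) (Q x))"
proof -
  have cross_coords: "cross a b = (fst (snd a) * snd (snd b) - snd (snd a) * fst (snd b),
      snd (snd a) * fst b - fst a * snd (snd b), fst a * fst (snd b) - fst (snd a) * fst b)" for a b
    by (cases a; cases b) simp
  show ?thesis
    using assms unfolding poly_pt_deg_le_def cross_coords
    by (auto intro!: poly_deg_le_diff poly_deg_le_mult)
qed

lemma poly_deg_le_mon_eval:
  assumes "finite V" "poly_pt_deg_le V E P"
  shows "poly_deg_le V (mdeg \<beta> * E) (\<lambda>x. mon_eval \<beta> (P x))"
proof -
  obtain a b c where \<beta>: "\<beta> = (a, b, c)" by (cases \<beta>)
  have "mon_eval \<beta> v = fst v ^ a * fst (snd v) ^ b * snd (snd v) ^ c" for v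
    by (cases v) (simp add: \<beta>)
  moreover have "poly_deg_le V (a * E + b * E + c * E)
      (\<lambda>x. fst (P x) ^ a * fst (snd (P x)) ^ b * snd (snd (P x)) ^ c)"
    using assms unfolding poly_pt_deg_le_def by (intro poly_deg_le_mult poly_deg_le_power) auto
  ultimately show ?thesis by (simp add: \<beta> mdeg_def algebra_simps)
qed

lemma poly_pt_deg_le_chart_line:
  assumes "i < r"
  shows "poly_pt_deg_le (param_vars r) 1 (\<lambda>x. chart_line k x i)"
proof -
  have "poly_deg_le (param_vars r) 1 (\<lambda>x. x (Inr (i, t)))" for t
    using assms by (intro poly_deg_le_var finite_param_vars) (auto simp: param_vars_def)
  with poly_deg_le_const[OF finite_param_vars] show ?thesis
    by (cases "k i = 0"; cases "k i = 1") (simp_all add: poly_pt_deg_le_def chart_line_def chart_vec_def)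
qed

lemma poly_deg_le_star_power_sum:
  assumes "\<beta> \<in> monos_of d"
  shows "poly_deg_le (param_vars r) (1 + 2 * d) (star_power_sum r d k \<beta>)"
  unfolding star_power_sum_def
proof (intro poly_deg_le_sum finite_param_vars)
  fix p assume p: "p \<in> star_pairs r"
  then have "fst p < r" "snd p < r" by (auto simp: star_pairs_def)
  then have "poly_pt_deg_le (param_vars r) (1 + 1) (\<lambda>x. crossing (chart_line k x) p)"
    unfolding crossing_def by (intro poly_pt_deg_le_cross finite_param_vars poly_pt_deg_le_chart_line)
  from poly_deg_le_mon_eval[OF finite_param_vars this, of \<beta>] assms
  have "poly_deg_le (param_vars r) (2 * d) (\<lambda>x. mon_eval \<beta> (crossing (chart_line k x) p))"
    by (simp add: monos_of_def mult_2)
  moreover have "poly_deg_le (param_vars r) (1 + 0) (\<lambda>x. x (Inl p) * (fact d / mfact \<beta>))"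
    using p by (intro poly_deg_le_mult finite_param_vars poly_deg_le_var poly_deg_le_const)
      (auto simp: param_vars_def)
  ultimately show "poly_deg_le (param_vars r) (1 + 2 * d)
      (\<lambda>x. x (Inl p) * lin_power_coeff d (crossing (chart_line k x) p) \<beta>)"
    using poly_deg_le_mult[OF finite_param_vars] by (fastforce simp: lin_power_coeff_def mult.assoc)
qed

section \<open>Forms apolar to a star configuration are not general\<close>

lemma polyfun_if_poly_deg_le:
  assumes "poly_deg_le V E f"
  shows "f \<in> polyfun"
proof -
  have power: "(\<lambda>F. F v ^ n) \<in> polyfun" for v n
  proof (induction n)
    case (Suc n)
    then show ?case using pf_mult[OF pf_coord Suc] by simp
  qed (use pf_const[of 1] in simp)
  have prod: "(\<lambda>F. \<Prod>v\<in>W. F v ^ a v) \<in> polyfun" for W :: "mon set" and a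
  proof (induction W rule: infinite_finite_induct)
    case (insert v W)
    then show ?case using pf_mult[OF power insert.IH] by simp
  qed (use pf_const in auto)
  have "(\<lambda>F. \<Sum>a\<in>A. c a * monomial_at V a F) \<in> polyfun" for A c
    unfolding monomial_at_def
  proof (induction A rule: infinite_finite_induct)
    case (insert a A)
    then show ?case using pf_add[OF pf_mult[OF pf_const prod] insert.IH] by simp
  qed (use pf_const in auto)
  moreover obtain c where "\<And>x. f x = (\<Sum>a\<in>bounded_exps V E. c a * monomial_at V a x)"
    using assms unfolding poly_deg_le_def by blast
  then have "f = (\<lambda>x. \<Sum>a\<in>bounded_exps V E. c a * monomial_at V a x)" ..
  ultimately show ?thesis by simp
qed

lemma poly_deg_le_cong:
  assumes "poly_deg_le V E f" "\<And>v. v \<in> V \<Longrightarrow> x v = y v"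
  shows "f x = f y"
proof -
  have "monomial_at V a x = monomial_at V a y" for a
    unfolding monomial_at_def using assms(2) by simp
  with assms(1) show ?thesis unfolding poly_deg_le_def by auto
qed

lemma monomial_count_ineq:
  fixes N n M D :: nat
  assumes "n < M"
  defines "T \<equiv> N * (M * D + 1) ^ n"
  shows "N * (M * T * D + 1) ^ n < (T + 1) ^ M"
proof -
  have "M * T * D + 1 \<le> (T + 1) * (M * D + 1)"
    by (simp add: algebra_simps)
  then have "N * (M * T * D + 1) ^ n \<le> N * ((T + 1) * (M * D + 1)) ^ n"
    by (intro mult_le_mono2 power_mono) auto
  also have "\<dots> = N * (M * D + 1) ^ n * (T + 1) ^ n"
    unfolding power_mult_distrib by (simp only: mult_ac)
  also have "\<dots> = T * (T + 1) ^ n"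
    by (simp add: T_def)
  also have "\<dots> < (T + 1) ^ Suc n" by simp
  also have "\<dots> \<le> (T + 1) ^ M" using assms(1) by (intro power_increasing) auto
  finally show ?thesis .
qed

lemma poly_deg_le_monomial_at_comp:
  assumes "finite V" "a \<in> bounded_exps C T" "\<And>c. c \<in> C \<Longrightarrow> poly_deg_le V D (P c)"
  shows "poly_deg_le V (card C * T * D) (\<lambda>x. monomial_at C a (\<lambda>c. P c x))"
proof (rule poly_deg_le_mono[OF assms(1)])
  show "poly_deg_le V (\<Sum>c\<in>C. a c * D) (\<lambda>x. monomial_at C a (\<lambda>c. P c x))"
    unfolding monomial_at_def using assms
    by (intro poly_deg_le_prod poly_deg_le_power) (auto simp: mult.commute)
  have "(\<Sum>c\<in>C. a c * D) \<le> (\<Sum>c\<in>C. T * D)"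
    using assms(2) by (intro sum_mono mult_le_mono1) (auto simp: bounded_exps_def PiE_iff)
  then show "(\<Sum>c\<in>C. a c * D) \<le> card C * T * D" by simp
qed

lemma poly_deg_le_choose_coeffs:
  assumes "\<And>i. i \<in> I \<Longrightarrow> poly_deg_le V E (f i)"
  obtains cf where "\<And>i x. i \<in> I \<Longrightarrow> f i x = (\<Sum>e\<in>bounded_exps V E. cf i e * monomial_at V e x)"
proof -
  have "\<forall>i\<in>I. \<exists>c. \<forall>x. f i x = (\<Sum>e\<in>bounded_exps V E. c e * monomial_at V e x)"
    using assms unfolding poly_deg_le_def by blast
  from bchoice[OF this] obtain cf
    where "\<forall>i\<in>I. \<forall>x. f i x = (\<Sum>e\<in>bounded_exps V E. cf i e * monomial_at V e x)" by blast
  then show ?thesis using that by blast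
qed

text \<open>The coefficients of the equation solve a linear system: products of at most \<open>T\<close>-th
  powers of the coordinates outnumber the monomials in the parameters that occur after
  substitution.\<close>
lemma exists_poly_vanishing_on_images:
  fixes P :: "'k \<Rightarrow> 'c \<Rightarrow> ('v \<Rightarrow> complex) \<Rightarrow> complex"
  assumes fin: "finite K" "finite V" "finite C" and card: "card V < card C"
    and P: "\<And>k c. k \<in> K \<Longrightarrow> c \<in> C \<Longrightarrow> poly_deg_le V D (P k c)"
  shows "\<exists>T \<Phi>. poly_deg_le C T \<Phi> \<and> (\<exists>y. \<Phi> y \<noteq> 0) \<and> (\<forall>k\<in>K. \<forall>x. \<Phi> (\<lambda>c. P k c x) = 0)"
proof -
  define M where "M = card C"
  define T where "T = card K * (M * D + 1) ^ card V"
  define E where "E = M * T * D"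
  define A where "A = bounded_exps C T"
  have "poly_deg_le V E (\<lambda>x. monomial_at C (snd ka) (\<lambda>c. P (fst ka) c x))" if "ka \<in> K \<times> A" for ka
    using that fin(2) P unfolding E_def M_def A_def by (auto intro: poly_deg_le_monomial_at_comp)
  then obtain cf where cf: "\<And>k a x. k \<in> K \<Longrightarrow> a \<in> A \<Longrightarrow>
      monomial_at C a (\<lambda>c. P k c x) = (\<Sum>e\<in>bounded_exps V E. cf (k, a) e * monomial_at V e x)"
    by (rule poly_deg_le_choose_coeffs) auto
  have "finite (K \<times> bounded_exps V E)" "finite A"
    using fin by (simp_all add: A_def finite_bounded_exps)
  moreover have "card (K \<times> bounded_exps V E) < card A"
    using monomial_count_ineq[OF card, of "card K" D] fin
    by (simp add: A_def E_def T_def M_def card_cartesian_product card_bounded_exps)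
  ultimately obtain q where q: "\<exists>a\<in>A. q a \<noteq> 0"
    and eqs: "\<forall>ke\<in>K \<times> bounded_exps V E. (\<Sum>a\<in>A. cf (fst ke, a) (snd ke) * q a) = 0"
    using exists_nontrivial_solution[where c = "\<lambda>ke a. cf (fst ke, a) (snd ke)"] by blast
  define \<Phi> where "\<Phi> y = (\<Sum>a\<in>A. q a * monomial_at C a y)" for y
  have "poly_deg_le C T \<Phi>"
    unfolding poly_deg_le_def \<Phi>_def A_def by blast
  moreover have "\<exists>y. \<Phi> y \<noteq> 0"
    using monomial_coeffs_eq_0[OF fin(3), where E = T and q = q] q unfolding \<Phi>_def A_def by blast
  moreover have "\<Phi> (\<lambda>c. P k c x) = 0" if "k \<in> K" for k x
  proof -
    have "\<Phi> (\<lambda>c. P k c x) = (\<Sum>a\<in>A. q a * (\<Sum>e\<in>bounded_exps V E. cf (k, a) e * monomial_at V e x))"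
      unfolding \<Phi>_def using that by (intro sum.cong refl) (simp add: cf)
    also have "\<dots> = (\<Sum>e\<in>bounded_exps V E. (\<Sum>a\<in>A. cf (k, a) e * q a) * monomial_at V e x)"
      unfolding sum_distrib_left sum_distrib_right by (subst sum.swap) (simp only: mult_ac)
    also have "\<dots> = 0" using eqs that by (auto intro!: sum.neutral)
    finally show ?thesis .
  qed
  ultimately show ?thesis by blast
qed

lemma card_param_vars_lt_card_monos_of:
  assumes "r \<le> d"
  shows "card (param_vars r) < card (monos_of d)"
proof -
  have "2 * card (param_vars r) = r * (r - 1) + 4 * r"
    using card_star_pairs[of r] by (simp add: card_param_vars)
  also have "\<dots> \<le> d * (d - 1) + 4 * d"
    using assms by (intro add_mono mult_le_mono diff_le_mono) auto
  also have "\<dots> < 2 * card (monos_of d)"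
    using card_monos_of[of d] by (cases d) (auto simp: algebra_simps)
  finally show ?thesis by simp
qed

lemma general_not_apolar_star_points:
  assumes "r \<le> d"
  shows "general d (\<lambda>F. \<not> (\<exists>l. star_lines r l \<and> apolar (star_points r l) F))"
proof -
  obtain T \<Phi> y where \<Phi>: "poly_deg_le (monos_of d) T \<Phi>" "\<Phi> y \<noteq> 0"
    and vanish: "\<forall>k\<in>charts r. \<forall>x. \<Phi> (\<lambda>\<beta>. star_power_sum r d k \<beta> x) = 0"
    using exists_poly_vanishing_on_images[where P = "\<lambda>k \<beta>. star_power_sum r d k \<beta>",
        OF finite_charts finite_param_vars finite_monos_of
        card_param_vars_lt_card_monos_of[OF assms] poly_deg_le_star_power_sum]
    by blast
  define F0 where "F0 \<beta> = (if \<beta> \<in> monos_of d then y \<beta> else 0)" for \<beta>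
  have "homog d F0 \<and> \<Phi> F0 \<noteq> 0"
    using \<Phi> poly_deg_le_cong[OF \<Phi>(1), of F0 y]
    by (auto simp: F0_def homog_def monos_of_def)
  moreover have "\<not> (\<exists>l. star_lines r l \<and> apolar (star_points r l) F)" if "\<Phi> F \<noteq> 0" for F
  proof
    assume "\<exists>l. star_lines r l \<and> apolar (star_points r l) F"
    then obtain l where "star_lines r l" "apolar (star_points r l) F" by blast
    moreover have "r \<le> d + 2" using assms by simp
    ultimately obtain k x where "k \<in> charts r" "\<forall>\<beta>\<in>monos_of d. F \<beta> = star_power_sum r d k \<beta> x"
      using apolar_star_points_imp_star_power_sum by blast
    with vanish have "\<Phi> F = 0"
      using poly_deg_le_cong[OF \<Phi>(1), of F "\<lambda>\<beta>. star_power_sum r d k \<beta> x"] by auto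
    with that show False by simp
  qed
  ultimately show ?thesis
    unfolding general_def using polyfun_if_poly_deg_le[OF \<Phi>(1)] by blast
qed

lemma general_mono: "general d P \<Longrightarrow> (\<And>F. homog d F \<Longrightarrow> P F \<Longrightarrow> Q F) \<Longrightarrow> general d Q"
  unfolding general_def by blast

lemma general_if_all:
  assumes "\<And>F. homog d F \<Longrightarrow> P F"
  shows "general d P"
proof -
  have "homog d (\<lambda>_. 0)" by (simp add: homog_def)
  with assms show ?thesis
    unfolding general_def by (intro bexI[OF _ pf_const[of 1]]) auto
qed

theorem proposition3p5:
  fixes d r :: nat
  assumes "3 \<le> d"
  shows "general d (\<lambda>F.
           (d + 2 \<le> r \<longrightarrow> (\<exists>l. star_lines r l \<and> apolar (star_points r l) F)) \<and>
           (r \<le> d \<longrightarrow> \<not> (\<exists>l. star_lines r l \<and> apolar (star_points r l) F)))"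
proof (cases "r \<le> d")
  case True
  show ?thesis
    by (rule general_mono[OF general_not_apolar_star_points[OF True]]) (use True in auto)
next
  case False
  have "\<exists>l. star_lines r l \<and> apolar (star_points r l) F" if "homog d F" "d + 2 \<le> r" for F
    using star_lines_moment_curve apolar_star_points[OF star_lines_moment_curve that(2,1)] by blast
  with False show ?thesis by (intro general_if_all) auto
qed

end
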